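(* Let $n\ge 2$ and let $S=\{A_1,\dots,A_m\}$ be a finite set of real $n\times n$ matrices such that every $A\in S$ satisfies $A\mathbf{1}=\mathbf{1}$ and $\|Ax\|_{\mathcal{P}}\le\|x\|_{\mathcal{P}}$ for all $x\in\mathbb{R}^n$. Consider the switched system $x(t+1)=A_{\sigma(t)}x(t)$, $x(0)=x_0$, with $\sigma:\mathbb{N}\to\{1,\dots,m\}$. Then there exists a sequence $\sigma$ such that for every initial condition $x_0$ the trajectory converges to a multiple of $\mathbf{1}$ if and only if for every $x_0\in\mathcal{P}$ there exists $\sigma$ with $A_{\sigma(N-1)}\cdots A_{\sigma(0)}x_0\in\operatorname{int}(\mathcal{P})$, where $N=\tfrac12(3^n-2^{n+1}+1)$.
   Context: $\mathbf{1}=(1,\dots,1)^\top\in\mathbb{R}^n$. The seminorm is $\|x\|_{\mathcal{P}}=\tfrac12(\max_i x_i-\min_i x_i)$ and $\mathcal{P}=\{x:\|x\|_{\mathcal{P}}\le 1\}$. ($N$ equals the number of pairs $\{F,-F\}$ of opposite proper open faces of the polyhedron $\mathcal{P}$.) *)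

theory Defs
  imports "HOL-Analysis.Analysis"
begin

definition ones :: "real^'n" where
  "ones = (\<chi> i. 1)"

definition pnorm :: "real^'n \<Rightarrow> real" where
  "pnorm x = (Max (range (\<lambda>i. x $ i)) - Min (range (\<lambda>i. x $ i))) / 2"

definition Pball :: "(real^'n) set" where
  "Pball = {x. pnorm x \<le> 1}"

text \<open>Trajectory of the switched system x(t+1) = A_sigma(t) x(t), x(0) = x0;
  the switching signal is given directly as the sequence of chosen matrices.\<close>
fun traj :: "(nat \<Rightarrow> real^'n^'n) \<Rightarrow> real^'n \<Rightarrow> nat \<Rightarrow> real^'n" where
  "traj \<sigma> x0 0 = x0"
| "traj \<sigma> x0 (Suc t) = \<sigma> t *v traj \<sigma> x0 t"

text \<open>N = (3^n - 2^(n+1) + 1)/2 (an integer for every n).\<close>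
definition Nbound :: "nat \<Rightarrow> nat" where
  "Nbound n = (3 ^ n + 1 - 2 ^ (n + 1)) div 2"

end

theory Submission
  imports Defs "HOL-Library.Cardinality"
begin

text \<open>
  A point on the boundary of \<open>Pball\<close> lies on the proper face determined by the pair of index
  sets where its maximal and minimal entries are attained, and \<open>x \<mapsto> - x\<close> swaps the pair; there are
  exactly \<open>N\<close> pairs of opposite faces. Two boundary points \<open>x\<close>, \<open>y\<close> of the same face are
  interchangeable: \<open>(1 + e) y - e x\<close> stays in \<open>Pball\<close> for small \<open>e > 0\<close>, so by linearity and
  nonexpansiveness every product that pushes \<open>x\<close> into the interior pushes \<open>y\<close> there too.

  Necessity: along a shortest switching sequence taking \<open>x0\<close> into the interior, all earlier points
  lie on the boundary in pairwise different classes of opposite faces, since otherwise the loop between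
  two of them could be cut out; hence the length is at most \<open>N\<close>.

  Sufficiency: the finitely many vertices of the cube \<open>[-1, 1]\<^sup>n\<close> can all be driven into the
  interior by one concatenated switching sequence; by convexity and invariance along \<open>ones\<close> the
  resulting product contracts the seminorm by a factor \<open>\<rho> < 1\<close>. Repeating it periodically makes
  the seminorm decay geometrically along every trajectory; the increments are bounded by a multiple
  of the seminorm, so the trajectory converges, and its limit has seminorm \<open>0\<close>.
\<close>

section \<open>The seminorm\<close>

definition max_entry :: "real^'n \<Rightarrow> real" where
  "max_entry x = Max (range (\<lambda>i. x $ i))"

definition min_entry :: "real^'n \<Rightarrow> real" where
  "min_entry x = Min (range (\<lambda>i. x $ i))"

lemma pnorm_eq: "pnorm x = (max_entry x - min_entry x) / 2"
  by (simp add: pnorm_def max_entry_def min_entry_def)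

lemma max_entry_ge: "x $ i \<le> max_entry x"
  unfolding max_entry_def by (rule Max_ge) auto

lemma min_entry_le: "min_entry x \<le> x $ i"
  unfolding min_entry_def by (rule Min_le) auto

lemma max_entry_le_iff: "max_entry x \<le> c \<longleftrightarrow> (\<forall>i. x $ i \<le> c)"
  unfolding max_entry_def by (subst Max_le_iff) auto

lemma min_entry_ge_iff: "c \<le> min_entry x \<longleftrightarrow> (\<forall>i. c \<le> x $ i)"
  unfolding min_entry_def by (subst Min_ge_iff) auto

lemma max_entry_attained: obtains i where "x $ i = max_entry x"
proof -
  have "max_entry x \<in> range (\<lambda>i. x $ i)"
    unfolding max_entry_def by (rule Max_in) auto
  then show ?thesis using that by auto
qed

lemma min_entry_attained: obtains i where "x $ i = min_entry x"
proof -
  have "min_entry x \<in> range (\<lambda>i. x $ i)"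
    unfolding min_entry_def by (rule Min_in) auto
  then show ?thesis using that by auto
qed

lemma max_entry_map:
  assumes "mono f" and "\<And>i. y $ i = f (x $ i)"
  shows "max_entry y = f (max_entry x)"
proof -
  have "range (\<lambda>i. y $ i) = f ` range (\<lambda>i. x $ i)"
    using assms(2) by auto
  then show ?thesis
    unfolding max_entry_def by (simp add: mono_Max_commute[OF assms(1)])
qed

lemma min_entry_map:
  assumes "mono f" and "\<And>i. y $ i = f (x $ i)"
  shows "min_entry y = f (min_entry x)"
proof -
  have "range (\<lambda>i. y $ i) = f ` range (\<lambda>i. x $ i)"
    using assms(2) by auto
  then show ?thesis
    unfolding min_entry_def by (simp add: mono_Min_commute[OF assms(1)])
qed

lemma max_entry_uminus: "max_entry (- x) = - min_entry x"
proof -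
  have "range (\<lambda>i. (- x) $ i) = uminus ` range (\<lambda>i. x $ i)"
    by auto
  then show ?thesis
    unfolding max_entry_def min_entry_def by simp
qed

lemma min_entry_uminus: "min_entry (- x) = - max_entry x"
proof -
  have "range (\<lambda>i. (- x) $ i) = uminus ` range (\<lambda>i. x $ i)"
    by auto
  then show ?thesis
    unfolding max_entry_def min_entry_def by simp
qed

lemma ones_nth [simp]: "ones $ i = 1"
  by (simp add: ones_def)

lemma pnorm_nonneg: "0 \<le> pnorm x"
  using order_trans[OF min_entry_le max_entry_ge] by (simp add: pnorm_eq)

lemma pnorm_uminus [simp]: "pnorm (- x) = pnorm x"
  by (simp add: pnorm_eq max_entry_uminus min_entry_uminus)

lemma pnorm_scaleR [simp]: "pnorm (c *\<^sub>R x) = \<bar>c\<bar> * pnorm x"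
proof -
  have nonneg: "pnorm (a *\<^sub>R y) = a * pnorm y" if "0 \<le> a" for a and y :: "real^'n"
  proof -
    have "mono (\<lambda>t. a * t)"
      using that by (auto intro: monoI mult_left_mono)
    then have "max_entry (a *\<^sub>R y) = a * max_entry y" and "min_entry (a *\<^sub>R y) = a * min_entry y"
      by (auto intro: max_entry_map min_entry_map)
    then show ?thesis
      by (simp add: pnorm_eq right_diff_distrib)
  qed
  show ?thesis
  proof (cases "0 \<le> c")
    case True
    then show ?thesis by (simp add: nonneg)
  next
    case False
    have "pnorm (c *\<^sub>R x) = pnorm ((- c) *\<^sub>R (- x))"
      by simp
    also have "\<dots> = - c * pnorm (- x)"
      using False by (intro nonneg) simp
    finally show ?thesis
      using False by simp
  qed
qed

lemma pnorm_add_ones [simp]: "pnorm (x + c *\<^sub>R ones) = pnorm x"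
proof -
  have "mono (\<lambda>t. t + c)"
    by (auto intro: monoI)
  then show ?thesis
    by (simp add: pnorm_eq max_entry_map[of "\<lambda>t. t + c"] min_entry_map[of "\<lambda>t. t + c"])
qed

lemma pnorm_ones [simp]: "pnorm ones = 0"
  by (simp add: pnorm_eq max_entry_def min_entry_def)

lemma pnorm_triangle: "pnorm (x + y) \<le> pnorm x + pnorm y"
proof -
  have "max_entry (x + y) \<le> max_entry x + max_entry y"
    by (simp add: max_entry_le_iff add_mono max_entry_ge)
  moreover have "min_entry x + min_entry y \<le> min_entry (x + y)"
    by (simp add: min_entry_ge_iff add_mono min_entry_le)
  ultimately show ?thesis
    by (simp add: pnorm_eq field_simps)
qed

lemma pnorm_le_norm: "pnorm x \<le> norm x"
proof -
  have "max_entry x \<le> norm x" and "- norm x \<le> min_entry x"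
    using component_le_norm_cart[of x]
    by (auto simp: max_entry_le_iff min_entry_ge_iff abs_le_iff minus_le_iff)
  then show ?thesis
    by (simp add: pnorm_eq)
qed

lemma pnorm_eq_0_iff: "pnorm x = 0 \<longleftrightarrow> (\<exists>c. x = c *\<^sub>R ones)"
proof
  assume "pnorm x = 0"
  then have "x $ i = min_entry x" for i
    using max_entry_ge[of x i] min_entry_le[of x i] by (simp add: pnorm_eq)
  then have "x = min_entry x *\<^sub>R ones"
    by (simp add: vec_eq_iff)
  then show "\<exists>c. x = c *\<^sub>R ones" ..
qed auto

lemma pnorm_lipschitz: "1-lipschitz_on UNIV pnorm"
proof (rule lipschitz_onI)
  fix x y :: "real^'n"
  have "pnorm x \<le> pnorm y + pnorm (x - y)" and "pnorm y \<le> pnorm x + pnorm (y - x)"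
    using pnorm_triangle[of y "x - y"] pnorm_triangle[of x "y - x"] by simp_all
  moreover have "pnorm (y - x) = pnorm (x - y)"
    using pnorm_uminus[of "x - y"] by simp
  ultimately show "dist (pnorm x) (pnorm y) \<le> 1 * dist x y"
    using pnorm_le_norm[of "x - y"] by (simp add: dist_real_def dist_norm abs_le_iff)
qed simp

lemma continuous_on_pnorm: "continuous_on UNIV pnorm"
  by (rule lipschitz_on_continuous_on[OF pnorm_lipschitz])

lemma tendsto_pnorm: "(f \<longlongrightarrow> y) F \<Longrightarrow> ((\<lambda>t. pnorm (f t)) \<longlongrightarrow> pnorm y) F"
  using continuous_on_pnorm by (rule continuous_on_tendsto_compose) simp_all

lemma interior_Pball: "interior Pball = {x. pnorm x < 1}"
proof
  have "open {x :: real^'n. pnorm x < 1}"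
    by (rule open_Collect_less[OF continuous_on_pnorm continuous_on_const])
  then show "{x. pnorm x < 1} \<subseteq> interior Pball"
    by (rule interior_maximal[rotated]) (auto simp: Pball_def)
next
  show "interior Pball \<subseteq> {x. pnorm x < 1}"
  proof
    fix x :: "real^'n"
    assume x: "x \<in> interior Pball"
    then obtain e where "e > 0" and e: "ball x e \<subseteq> Pball"
      by (meson mem_interior)
    define h where "h = e / 2 / (norm x + 1)"
    have "0 < norm x + 1"
      by (simp add: add_nonneg_pos)
    then have "h > 0" and "h * (norm x + 1) = e / 2"
      using \<open>e > 0\<close> by (simp_all add: h_def field_simps)
    then have "h * norm x < e"
      using \<open>e > 0\<close> by (simp add: algebra_simps)
    moreover have "dist x ((1 + h) *\<^sub>R x) = h * norm x"
      using \<open>h > 0\<close> by (simp add: dist_norm algebra_simps)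
    ultimately have "(1 + h) *\<^sub>R x \<in> ball x e"
      by simp
    then have "(1 + h) *\<^sub>R x \<in> Pball"
      using e by blast
    then have "(1 + h) * pnorm x \<le> 1"
      using \<open>h > 0\<close> by (simp add: Pball_def)
    then have "pnorm x \<le> 1 / (1 + h)"
      using \<open>h > 0\<close> by (simp add: field_simps)
    also have "\<dots> < 1"
      using \<open>h > 0\<close> by simp
    finally show "x \<in> {x. pnorm x < 1}"
      by simp
  qed
qed

section \<open>Trajectories\<close>

fun switch_prod :: "(nat \<Rightarrow> real^'n^'n) \<Rightarrow> nat \<Rightarrow> real^'n^'n" where
  "switch_prod \<sigma> 0 = mat 1"
| "switch_prod \<sigma> (Suc t) = \<sigma> t ** switch_prod \<sigma> t"

lemma traj_eq_switch_prod: "traj \<sigma> x t = switch_prod \<sigma> t *v x"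
  by (induction t) (simp_all add: matrix_vector_mul_assoc)

lemma pnorm_switch_prod_le:
  assumes "\<And>t z. pnorm (\<sigma> t *v z) \<le> pnorm z"
  shows "pnorm (switch_prod \<sigma> m *v z) \<le> pnorm z"
proof (induction m)
  case (Suc m)
  then show ?case
    using assms order_trans by (simp add: matrix_vector_mul_assoc[symmetric]) blast
qed simp

lemma traj_shift: "traj \<sigma> x (a + b) = traj (\<lambda>t. \<sigma> (t + a)) (traj \<sigma> x a) b"
  by (induction b) (simp_all add: add.commute)

lemma traj_cong_prefix: "(\<And>t. t < a \<Longrightarrow> \<sigma> t = \<sigma>' t) \<Longrightarrow> traj \<sigma> x a = traj \<sigma>' x a"
  by (induction a) simp_all

lemma pnorm_traj_antimono:
  assumes "\<And>t z. pnorm (\<sigma> t *v z) \<le> pnorm z" and "t \<le> t'"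
  shows "pnorm (traj \<sigma> x t') \<le> pnorm (traj \<sigma> x t)"
proof -
  obtain d where "t' = t + d"
    using \<open>t \<le> t'\<close> le_Suc_ex by blast
  then show ?thesis
    using assms(1) by (simp add: traj_shift traj_eq_switch_prod[of _ _ d] pnorm_switch_prod_le)
qed

definition switch_append :: "(nat \<Rightarrow> 'a) \<Rightarrow> nat \<Rightarrow> (nat \<Rightarrow> 'a) \<Rightarrow> nat \<Rightarrow> 'a" where
  "switch_append \<sigma> m \<tau> t = (if t < m then \<sigma> t else \<tau> (t - m))"

lemma traj_switch_append: "traj (switch_append \<sigma> m \<tau>) x (m + k) = traj \<tau> (traj \<sigma> x m) k"
proof -
  have "traj (switch_append \<sigma> m \<tau>) x m = traj \<sigma> x m"
    by (rule traj_cong_prefix) (simp add: switch_append_def)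
  moreover have "(\<lambda>t. switch_append \<sigma> m \<tau> (t + m)) = \<tau>"
    by (simp add: switch_append_def)
  ultimately show ?thesis
    by (simp add: traj_shift)
qed

section \<open>Faces of the unit ball\<close>

definition face_type :: "real^'n \<Rightarrow> 'n set \<times> 'n set" where
  "face_type x = ({i. x $ i = max_entry x}, {i. x $ i = min_entry x})"

definition face_class :: "real^'n \<Rightarrow> ('n set \<times> 'n set) set" where
  "face_class x = {face_type x, face_type (- x)}"

lemma face_type_uminus: "face_type (- x) = prod.swap (face_type x)"
  by (auto simp: face_type_def max_entry_uminus min_entry_uminus)

lemma pnorm_extrapolate_le:
  assumes "pnorm x = pnorm y"
    and "fst (face_type y) \<subseteq> fst (face_type x)" and "snd (face_type y) \<subseteq> snd (face_type x)"
  shows "\<exists>e>0. pnorm ((1 + e) *\<^sub>R y - e *\<^sub>R x) \<le> pnorm y"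
proof -
  txt \<open>On coordinates where \<open>y\<close> is extremal the expressions below vanish for every \<open>e\<close>;
    elsewhere they have strict sign at \<open>e = 0\<close>, hence for all small \<open>e\<close>.\<close>
  have upper: "\<forall>\<^sub>F e in at_right 0. (1 + e) * (y $ k - max_entry y) - e * (x $ k - max_entry x) \<le> 0"
    for k
  proof (cases "y $ k = max_entry y")
    case True
    then have "x $ k = max_entry x"
      using assms(2) by (auto simp: face_type_def)
    with True show ?thesis
      by simp
  next
    case False
    then have neg: "y $ k - max_entry y < 0"
      using max_entry_ge[of y k] by simp
    have "((\<lambda>e. (1 + e) * (y $ k - max_entry y) - e * (x $ k - max_entry x))
        \<longlongrightarrow> y $ k - max_entry y) (at_right 0)"
      by (auto intro!: tendsto_eq_intros)
    from order_tendstoD(2)[OF this neg] show ?thesis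
      by (rule eventually_mono) simp
  qed
  have lower: "\<forall>\<^sub>F e in at_right 0. 0 \<le> (1 + e) * (y $ k - min_entry y) - e * (x $ k - min_entry x)"
    for k
  proof (cases "y $ k = min_entry y")
    case True
    then have "x $ k = min_entry x"
      using assms(3) by (auto simp: face_type_def)
    with True show ?thesis
      by simp
  next
    case False
    then have pos: "0 < y $ k - min_entry y"
      using min_entry_le[of y k] by simp
    have "((\<lambda>e. (1 + e) * (y $ k - min_entry y) - e * (x $ k - min_entry x))
        \<longlongrightarrow> y $ k - min_entry y) (at_right 0)"
      by (auto intro!: tendsto_eq_intros)
    from order_tendstoD(1)[OF this pos] show ?thesis
      by (rule eventually_mono) simp
  qed
  have "\<forall>\<^sub>F e in at_right (0::real). 0 < e \<and>
      (\<forall>k. (1 + e) * (y $ k - max_entry y) - e * (x $ k - max_entry x) \<le> 0 \<and>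
           0 \<le> (1 + e) * (y $ k - min_entry y) - e * (x $ k - min_entry x))"
    using upper lower by (intro eventually_conj eventually_at_right_less eventually_all_finite) simp_all
  then obtain e where "0 < e"
    and e: "\<And>k. (1 + e) * (y $ k - max_entry y) - e * (x $ k - max_entry x) \<le> 0"
      "\<And>k. 0 \<le> (1 + e) * (y $ k - min_entry y) - e * (x $ k - min_entry x)"
    using eventually_happens'[OF trivial_limit_at_right_real] by blast
  define z where "z = (1 + e) *\<^sub>R y - e *\<^sub>R x"
  have "max_entry z \<le> (1 + e) * max_entry y - e * max_entry x"
    unfolding max_entry_le_iff using e(1) by (simp add: z_def algebra_simps)
  moreover have "(1 + e) * min_entry y - e * min_entry x \<le> min_entry z"
    unfolding min_entry_ge_iff using e(2) by (simp add: z_def algebra_simps)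
  ultimately have "pnorm z \<le> (1 + e) * pnorm y - e * pnorm x"
    by (simp add: pnorm_eq field_simps)
  then show ?thesis
    using \<open>0 < e\<close> assms(1) by (auto simp: z_def algebra_simps)
qed

lemma pnorm_less_transfer:
  fixes B :: "real^'n^'n"
  assumes nonexp: "\<And>z. pnorm (B *v z) \<le> pnorm z"
    and "pnorm x = pnorm y"
    and "fst (face_type y) \<subseteq> fst (face_type x)" and "snd (face_type y) \<subseteq> snd (face_type x)"
    and "pnorm (B *v x) < pnorm x"
  shows "pnorm (B *v y) < pnorm y"
proof -
  obtain e where "e > 0" and e: "pnorm ((1 + e) *\<^sub>R y - e *\<^sub>R x) \<le> pnorm y"
    using pnorm_extrapolate_le assms(2-4) by blast
  have "(1 + e) *\<^sub>R (B *v y) = B *v ((1 + e) *\<^sub>R y - e *\<^sub>R x) + e *\<^sub>R (B *v x)"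
    by (simp add: matrix_vector_mult_diff_distrib matrix_vector_mult_scaleR)
  then have "(1 + e) * pnorm (B *v y) \<le> pnorm (B *v ((1 + e) *\<^sub>R y - e *\<^sub>R x)) + e * pnorm (B *v x)"
    using \<open>e > 0\<close> pnorm_triangle by (metis abs_of_pos pnorm_scaleR add_pos_pos zero_less_one)
  also have "\<dots> < pnorm y + e * pnorm y"
    using nonexp[of "(1 + e) *\<^sub>R y - e *\<^sub>R x"] e assms(2,5) \<open>e > 0\<close>
    by (intro add_le_less_mono mult_strict_left_mono) simp_all
  also have "\<dots> = (1 + e) * pnorm y"
    by (simp add: algebra_simps)
  finally show ?thesis
    using \<open>e > 0\<close> by (simp add: mult_less_cancel_left_pos)
qed

lemma pnorm_less_transfer_class:
  fixes B :: "real^'n^'n"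
  assumes nonexp: "\<And>z. pnorm (B *v z) \<le> pnorm z"
    and "pnorm x = pnorm y" and "face_class x = face_class y"
    and "pnorm (B *v x) < pnorm x"
  shows "pnorm (B *v y) < pnorm y"
proof -
  have "face_type y = face_type x \<or> face_type y = face_type (- x)"
    using assms(3) by (auto simp: face_class_def doubleton_eq_iff)
  then show ?thesis
  proof
    assume "face_type y = face_type x"
    then show ?thesis
      using pnorm_less_transfer[OF nonexp assms(2) _ _ assms(4)] by simp
  next
    assume "face_type y = face_type (- x)"
    moreover have "pnorm (B *v - x) < pnorm (- x)"
      using assms(4) matrix_vector_mult_diff_distrib[of B 0 x] by simp
    ultimately show ?thesis
      using pnorm_less_transfer[OF nonexp, of "- x" y] assms(2) by simp
  qed
qed

text \<open>The pair \<open>(I, J)\<close> stands for the proper face of \<open>Pball\<close> on which the entries indexed by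
  \<open>I\<close> are maximal and those indexed by \<open>J\<close> minimal; swapping gives the opposite face.\<close>

definition proper_face_types :: "('n::finite set \<times> 'n set) set" where
  "proper_face_types = {(I, J). I \<noteq> {} \<and> J \<noteq> {} \<and> I \<inter> J = {}}"

definition opposite_face_pairs :: "('n::finite set \<times> 'n set) set set" where
  "opposite_face_pairs = (\<lambda>p. {p, prod.swap p}) ` proper_face_types"

lemma card_disjoint_pairs: "card {(I, J). I \<inter> J = ({} :: 'n::finite set)} = 3 ^ CARD('n)"
proof -
  let ?split = "\<lambda>g :: 'n \<Rightarrow> bool option. ({i. g i = Some True}, {i. g i = Some False})"
  let ?code = "\<lambda>(I, J) i. if i \<in> I then Some True else if i \<in> J then Some False else None"
  have "bij_betw ?split UNIV {(I, J). I \<inter> J = {}}"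
  proof (rule bij_betw_byWitness[where f' = ?code])
    show "\<forall>g\<in>UNIV. ?code (?split g) = g"
    proof
      fix g :: "'n \<Rightarrow> bool option"
      show "?code (?split g) = g"
      proof
        fix i
        show "?code (?split g) i = g i"
          by (cases "g i") auto
      qed
    qed
  qed auto
  then have "card {(I, J). I \<inter> J = ({} :: 'n set)} = CARD('n \<Rightarrow> bool option)"
    by (simp add: bij_betw_same_card)
  then show ?thesis
    by (simp add: card_fun)
qed

lemma card_proper_face_types:
  "card (proper_face_types :: ('n::finite set \<times> 'n set) set) + 2 ^ (CARD('n) + 1) = 3 ^ CARD('n) + 1"
proof -
  let ?D = "{(I, J). I \<inter> J = ({} :: 'n set)}"
  let ?E1 = "Pair {} ` UNIV :: ('n set \<times> 'n set) set"
    and ?E2 = "(\<lambda>I. (I, {})) ` UNIV :: ('n set \<times> 'n set) set"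
  have "card (UNIV :: 'n set set) = 2 ^ CARD('n)"
    using card_Pow[of "UNIV :: 'n set"] by simp
  then have "card ?E1 = 2 ^ CARD('n)" and "card ?E2 = 2 ^ CARD('n)"
    by (simp_all add: card_image inj_on_def)
  moreover have "?E1 \<inter> ?E2 = {({}, {})}"
    by auto
  moreover have "card ?E1 + card ?E2 = card (?E1 \<union> ?E2) + card (?E1 \<inter> ?E2)"
    by (rule card_Un_Int) simp_all
  ultimately have "card (?E1 \<union> ?E2) + 1 = 2 ^ (CARD('n) + 1)"
    by simp
  moreover have "proper_face_types = ?D - (?E1 \<union> ?E2)" and "?E1 \<union> ?E2 \<subseteq> ?D"
    by (auto simp: proper_face_types_def)
  ultimately show ?thesis
    using card_disjoint_pairs[where 'n = 'n] card_Diff_subset[of "?E1 \<union> ?E2" ?D]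
      card_mono[of ?D "?E1 \<union> ?E2"] by simp
qed

lemma card_opposite_face_pairs:
  "card (proper_face_types :: ('n::finite set \<times> 'n set) set) = 2 * card (opposite_face_pairs :: ('n set \<times> 'n set) set set)"
proof -
  have "\<Union> opposite_face_pairs = (proper_face_types :: ('n set \<times> 'n set) set)"
    by (auto simp: opposite_face_pairs_def proper_face_types_def)
  moreover have "pairwise disjnt (opposite_face_pairs :: ('n set \<times> 'n set) set set)"
    by (auto simp: pairwise_def disjnt_def opposite_face_pairs_def)
  moreover have "card C = 2" if C_in: "C \<in> opposite_face_pairs" for C :: "('n set \<times> 'n set) set"
  proof -
    obtain I J where C: "C = {(I, J), (J, I)}" and "I \<noteq> {}" and "I \<inter> J = {}"
      using C_in unfolding opposite_face_pairs_def proper_face_types_def by force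
    then have "I \<noteq> J"
      by blast
    with C show ?thesis
      by simp
  qed
  ultimately show ?thesis
    using card_Union_disjoint[of "opposite_face_pairs :: ('n set \<times> 'n set) set set"]
    by (simp add: opposite_face_pairs_def)
qed

lemma card_opposite_face_pairs_eq_Nbound:
  "card (opposite_face_pairs :: ('n::finite set \<times> 'n set) set set) = Nbound CARD('n)"
  using card_proper_face_types[where 'n = 'n] card_opposite_face_pairs[where 'n = 'n]
  by (simp add: Nbound_def)

lemma face_class_in_opposite_face_pairs:
  fixes x :: "real^'n"
  assumes "0 < pnorm x"
  shows "face_class x \<in> opposite_face_pairs"
proof -
  obtain i j where "x $ i = max_entry x" and "x $ j = min_entry x"
    by (metis max_entry_attained min_entry_attained)
  then have "face_type x \<in> proper_face_types"
    using assms by (auto simp: face_type_def proper_face_types_def pnorm_eq)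
  then show ?thesis
    by (auto simp: face_class_def opposite_face_pairs_def face_type_uminus)
qed

section \<open>Necessity: reaching the interior within \<open>N\<close> steps\<close>

lemma face_class_repeats:
  fixes x :: "nat \<Rightarrow> real^'n"
  assumes "Nbound CARD('n) < k" and "\<And>i. i < k \<Longrightarrow> 0 < pnorm (x i)"
  obtains a b where "a < b" and "b < k" and "face_class (x b) = face_class (x a)"
proof -
  have "\<not> inj_on (\<lambda>i. face_class (x i)) {..<k}"
  proof
    assume inj: "inj_on (\<lambda>i. face_class (x i)) {..<k}"
    have "(\<lambda>i. face_class (x i)) ` {..<k} \<subseteq> opposite_face_pairs"
      using assms(2) by (auto intro: face_class_in_opposite_face_pairs)
    from card_inj_on_le[OF inj this] have "k \<le> card (opposite_face_pairs :: ('n set \<times> 'n set) set set)"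
      by simp
    then show False
      using assms(1) by (simp add: card_opposite_face_pairs_eq_Nbound)
  qed
  then obtain i j where "i < k" and "j < k" and "i \<noteq> j" and same: "face_class (x i) = face_class (x j)"
    unfolding inj_on_def by auto
  show ?thesis
  proof (cases "i < j")
    case True
    then show ?thesis
      using that[of i j] \<open>j < k\<close> same by simp
  next
    case False
    then show ?thesis
      using that[of j i] \<open>i < k\<close> \<open>i \<noteq> j\<close> same by simp
  qed
qed

lemma traj_tendsto_ones_reaches_interior:
  assumes "traj \<sigma> x0 \<longlonglongrightarrow> c *\<^sub>R ones"
  shows "\<exists>T. pnorm (traj \<sigma> x0 T) < 1"
proof -
  have "(\<lambda>t. pnorm (traj \<sigma> x0 t)) \<longlonglongrightarrow> 0"
    using tendsto_pnorm[OF assms] by simp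
  then have "\<forall>\<^sub>F t in sequentially. pnorm (traj \<sigma> x0 t) < 1"
    by (rule order_tendstoD) simp
  then show ?thesis
    using eventually_happens'[OF sequentially_bot] by blast
qed

lemma pnorm_traj_less_skip_loop:
  assumes nonexp: "\<And>t z. pnorm (\<sigma> t *v z) \<le> pnorm z"
    and "pnorm (traj \<sigma> x b) = pnorm (traj \<sigma> x a)"
    and "face_class (traj \<sigma> x b) = face_class (traj \<sigma> x a)"
    and "pnorm (traj \<sigma> x (b + r)) < pnorm (traj \<sigma> x b)"
  shows "pnorm (traj (switch_append \<sigma> a (\<lambda>t. \<sigma> (t + b))) x (a + r)) < pnorm (traj \<sigma> x a)"
proof -
  let ?B = "switch_prod (\<lambda>t. \<sigma> (t + b)) r"
  have "pnorm (?B *v traj \<sigma> x b) < pnorm (traj \<sigma> x b)"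
    using assms(4) by (simp add: traj_shift traj_eq_switch_prod[of _ _ r])
  then have "pnorm (?B *v traj \<sigma> x a) < pnorm (traj \<sigma> x a)"
    using nonexp by (intro pnorm_less_transfer_class[OF _ assms(2,3)] pnorm_switch_prod_le)
  then show ?thesis
    by (simp add: traj_switch_append traj_eq_switch_prod[of _ _ r])
qed

lemma reaches_interior_within_Nbound:
  fixes S :: "(real^'n^'n) set"
  assumes nonexp: "\<And>A x. A \<in> S \<Longrightarrow> pnorm (A *v x) \<le> pnorm x"
    and "\<forall>t. \<sigma> t \<in> S" and "pnorm x0 \<le> 1" and "pnorm (traj \<sigma> x0 T) < 1"
  shows "\<exists>\<sigma>'. (\<forall>t. \<sigma>' t \<in> S) \<and> pnorm (traj \<sigma>' x0 (Nbound CARD('n))) < 1"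
proof -
  define P where "P k \<longleftrightarrow> (\<exists>\<sigma>'. (\<forall>t. \<sigma>' t \<in> S) \<and> pnorm (traj \<sigma>' x0 k) < 1)" for k
  define k where "k = (LEAST k. P k)"
  have "P T"
    using assms(2,4) by (auto simp: P_def)
  then have "P k"
    unfolding k_def by (rule LeastI)
  then obtain \<sigma>' where \<sigma>': "\<forall>t. \<sigma>' t \<in> S" and reach: "pnorm (traj \<sigma>' x0 k) < 1"
    by (auto simp: P_def)
  have nonexp': "pnorm (\<sigma>' t *v z) \<le> pnorm z" for t z
    using nonexp \<sigma>' by blast
  have "k \<le> Nbound CARD('n)"
  proof (rule ccontr)
    assume "\<not> k \<le> Nbound CARD('n)"
    let ?x = "traj \<sigma>' x0"
    have boundary: "pnorm (?x i) = 1" if "i < k" for i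
    proof -
      have "\<not> P i"
        using that by (auto simp: k_def dest: not_less_Least)
      then have "\<not> pnorm (?x i) < 1"
        using \<sigma>' by (auto simp: P_def)
      moreover have "pnorm (?x i) \<le> pnorm (?x 0)"
        using nonexp' by (rule pnorm_traj_antimono) simp
      ultimately show ?thesis
        using assms(3) by simp
    qed
    have "Nbound CARD('n) < k"
      using \<open>\<not> k \<le> Nbound CARD('n)\<close> by simp
    moreover have "0 < pnorm (?x i)" if "i < k" for i
      using boundary[OF that] by simp
    ultimately obtain a b where "a < b" and "b < k" and loop: "face_class (?x b) = face_class (?x a)"
      by (rule face_class_repeats)
    have "pnorm (traj (switch_append \<sigma>' a (\<lambda>t. \<sigma>' (t + b))) x0 (a + (k - b))) < pnorm (?x a)"
      using \<open>a < b\<close> \<open>b < k\<close> boundary reach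
      by (intro pnorm_traj_less_skip_loop[OF nonexp' _ loop]) simp_all
    moreover have "\<forall>t. switch_append \<sigma>' a (\<lambda>t. \<sigma>' (t + b)) t \<in> S"
      using \<sigma>' by (simp add: switch_append_def)
    moreover have "pnorm (?x a) = 1"
      using \<open>a < b\<close> \<open>b < k\<close> by (intro boundary) simp
    ultimately have "P (a + (k - b))"
      unfolding P_def by auto
    then show False
      using \<open>a < b\<close> \<open>b < k\<close> not_less_Least[of "a + (k - b)" P] by (simp add: k_def)
  qed
  then have "pnorm (traj \<sigma>' x0 (Nbound CARD('n))) \<le> pnorm (traj \<sigma>' x0 k)"
    by (rule pnorm_traj_antimono[OF nonexp'])
  then have "pnorm (traj \<sigma>' x0 (Nbound CARD('n))) < 1"
    using reach by linarith
  then show ?thesis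
    using \<sigma>' by blast
qed

section \<open>Sufficiency: a switching sequence driving every trajectory to consensus\<close>

lemma abs_sub_midrange_le: "\<bar>x $ i - (max_entry x + min_entry x) / 2\<bar> \<le> pnorm x"
  using max_entry_ge[of x i] min_entry_le[of x i] by (simp add: pnorm_eq abs_le_iff field_simps)

lemma pnorm_le_on_convex_hull:
  fixes B :: "real^'n^'n"
  assumes "\<And>v. v \<in> s \<Longrightarrow> pnorm (B *v v) \<le> \<rho>" and "y \<in> convex hull s"
  shows "pnorm (B *v y) \<le> \<rho>"
proof -
  have "convex {y. pnorm (B *v y) \<le> \<rho>}"
  proof (rule convexI)
    fix y z :: "real^'n" and u v :: real
    assume "y \<in> {y. pnorm (B *v y) \<le> \<rho>}" "z \<in> {y. pnorm (B *v y) \<le> \<rho>}" "0 \<le> u" "0 \<le> v" "u + v = 1"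
    then have "u * pnorm (B *v y) + v * pnorm (B *v z) \<le> u * \<rho> + v * \<rho>"
      by (intro add_mono mult_left_mono) simp_all
    moreover have "pnorm (B *v (u *\<^sub>R y + v *\<^sub>R z)) \<le> u * pnorm (B *v y) + v * pnorm (B *v z)"
      using pnorm_triangle[of "u *\<^sub>R (B *v y)" "v *\<^sub>R (B *v z)"] \<open>0 \<le> u\<close> \<open>0 \<le> v\<close>
      by (simp add: matrix_vector_right_distrib matrix_vector_mult_scaleR)
    ultimately show "u *\<^sub>R y + v *\<^sub>R z \<in> {y. pnorm (B *v y) \<le> \<rho>}"
      using \<open>u + v = 1\<close> by (simp add: distrib_right[symmetric])
  qed
  then have "convex hull s \<subseteq> {y. pnorm (B *v y) \<le> \<rho>}"
    using assms(1) by (intro hull_minimal) auto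
  then show ?thesis
    using assms(2) by blast
qed

lemma pnorm_contraction_from_cube:
  fixes B :: "real^'n^'n"
  assumes nonexp: "\<And>z. pnorm (B *v z) \<le> pnorm z"
    and cube: "\<And>y. (\<And>i. \<bar>y $ i\<bar> \<le> 1) \<Longrightarrow> pnorm (B *v y) \<le> \<rho>"
  shows "pnorm (B *v x) \<le> \<rho> * pnorm x"
proof (cases "pnorm x = 0")
  case True
  then show ?thesis
    using nonexp[of x] pnorm_nonneg[of "B *v x"] by simp
next
  case False
  then have "0 < pnorm x"
    using pnorm_nonneg[of x] by simp
  define c where "c = (max_entry x + min_entry x) / 2"
  define y where "y = (1 / pnorm x) *\<^sub>R (x - c *\<^sub>R ones)"
  have "\<bar>y $ i\<bar> \<le> 1" for i
    using abs_sub_midrange_le[of x i] \<open>0 < pnorm x\<close> by (simp add: y_def c_def divide_le_eq_1)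
  then have "pnorm (B *v y) \<le> \<rho>"
    by (rule cube)
  have "B *v x = pnorm x *\<^sub>R (B *v y) + B *v (c *\<^sub>R ones)"
    using \<open>0 < pnorm x\<close>
    by (simp add: y_def matrix_vector_mult_scaleR matrix_vector_mult_diff_distrib
        matrix_vector_right_distrib[symmetric])
  moreover have "pnorm (B *v (c *\<^sub>R ones)) = 0"
    using nonexp[of "c *\<^sub>R ones"] pnorm_nonneg[of "B *v (c *\<^sub>R ones)"] by simp
  ultimately have "pnorm (B *v x) \<le> pnorm x * pnorm (B *v y)"
    using pnorm_triangle[of "pnorm x *\<^sub>R (B *v y)" "B *v (c *\<^sub>R ones)"] \<open>0 < pnorm x\<close>
    by simp
  also have "\<dots> \<le> \<rho> * pnorm x"
    using \<open>pnorm (B *v y) \<le> \<rho>\<close> \<open>0 < pnorm x\<close> by (simp add: mult.commute)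
  finally show ?thesis .
qed

lemma unit_cube_convex_hull:
  obtains s :: "(real^'n) set" where "finite s" and "\<And>y. y \<in> convex hull s \<longleftrightarrow> (\<forall>i. \<bar>y $ i\<bar> \<le> 1)"
proof -
  obtain s :: "(real^'n) set" where "finite s" and hull: "cbox (- 1) 1 = convex hull s"
    using cube_convex_hull[of 1 "0 :: real^'n"] by (auto simp: Cart_1)
  have "y \<in> convex hull s \<longleftrightarrow> (\<forall>i. \<bar>y $ i\<bar> \<le> 1)" for y
    unfolding hull[symmetric] mem_box_cart by (auto simp: abs_le_iff)
  with \<open>finite s\<close> show ?thesis
    using that by blast
qed

lemma pnorm_le_1_if_abs_le_1:
  assumes "\<And>i. \<bar>y $ i\<bar> \<le> 1"
  shows "pnorm y \<le> 1"
proof -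
  have "max_entry y \<le> 1" and "- 1 \<le> min_entry y"
    using assms by (simp_all add: max_entry_le_iff min_entry_ge_iff abs_le_iff)
  then show ?thesis
    by (simp add: pnorm_eq)
qed

lemma finite_set_reaches_interior:
  fixes S :: "(real^'n^'n) set" and W :: "(real^'n) set"
  assumes nonexp: "\<And>A x. A \<in> S \<Longrightarrow> pnorm (A *v x) \<le> pnorm x"
    and reach: "\<And>x0. pnorm x0 \<le> 1 \<Longrightarrow> \<exists>\<sigma> T. (\<forall>t. \<sigma> t \<in> S) \<and> pnorm (traj \<sigma> x0 T) < 1"
    and "finite W" and "\<And>w. w \<in> W \<Longrightarrow> pnorm w \<le> 1"
  shows "\<exists>\<sigma> m. (\<forall>t. \<sigma> t \<in> S) \<and> (\<forall>w\<in>W. pnorm (traj \<sigma> w m) < 1)"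
  using assms(3,4)
proof (induction W rule: finite_induct)
  case empty
  obtain \<sigma> where "\<forall>t. \<sigma> t \<in> S"
    using reach[of 0] by (auto simp: pnorm_eq max_entry_def min_entry_def)
  then show ?case
    by blast
next
  case (insert w W)
  then obtain \<tau> m where \<tau>: "\<forall>t. \<tau> t \<in> S" and W: "\<forall>v\<in>W. pnorm (traj \<tau> v m) < 1"
    by auto
  have nonexp_\<tau>: "pnorm (\<tau> t *v z) \<le> pnorm z" for t z
    using nonexp \<tau> by blast
  have "pnorm (traj \<tau> w m) \<le> pnorm (traj \<tau> w 0)"
    by (rule pnorm_traj_antimono[OF nonexp_\<tau>]) simp
  moreover have "pnorm w \<le> 1"
    using insert.prems by simp
  ultimately have "pnorm (traj \<tau> w m) \<le> 1"
    by simp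
  then obtain \<sigma> T where \<sigma>: "\<forall>t. \<sigma> t \<in> S" and w: "pnorm (traj \<sigma> (traj \<tau> w m) T) < 1"
    using reach by blast
  define \<tau>' where "\<tau>' = switch_append \<tau> m \<sigma>"
  have \<tau>': "\<forall>t. \<tau>' t \<in> S"
    using \<tau> \<sigma> by (simp add: \<tau>'_def switch_append_def)
  have "pnorm (traj \<tau>' v (m + T)) < 1" if "v \<in> insert w W" for v
  proof (cases "v = w")
    case True
    then show ?thesis
      using w by (simp add: \<tau>'_def traj_switch_append)
  next
    case False
    have "pnorm (traj \<sigma> (traj \<tau> v m) T) \<le> pnorm (traj \<sigma> (traj \<tau> v m) 0)"
      using nonexp \<sigma> by (intro pnorm_traj_antimono) auto
    moreover have "pnorm (traj \<tau> v m) < 1"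
      using that False W by simp
    ultimately show ?thesis
      by (simp add: \<tau>'_def traj_switch_append)
  qed
  then show ?case
    using \<tau>' by blast
qed

lemma uniform_contraction:
  fixes S :: "(real^'n^'n) set"
  assumes nonexp: "\<And>A x. A \<in> S \<Longrightarrow> pnorm (A *v x) \<le> pnorm x"
    and reach: "\<And>x0. pnorm x0 \<le> 1 \<Longrightarrow> \<exists>\<sigma> T. (\<forall>t. \<sigma> t \<in> S) \<and> pnorm (traj \<sigma> x0 T) < 1"
  obtains \<tau> M \<rho> where "\<forall>t. \<tau> t \<in> S" and "0 < M" and "0 \<le> \<rho>" and "\<rho> < 1"
    and "\<And>x. pnorm (traj \<tau> x M) \<le> \<rho> * pnorm x"
proof -
  obtain s :: "(real^'n) set" where "finite s" and cube: "\<And>y. y \<in> convex hull s \<longleftrightarrow> (\<forall>i. \<bar>y $ i\<bar> \<le> 1)"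
    using unit_cube_convex_hull by blast
  have "pnorm v \<le> 1" if "v \<in> s" for v
    using cube hull_inc[OF that] by (blast intro: pnorm_le_1_if_abs_le_1)
  then obtain \<tau> m where \<tau>: "\<forall>t. \<tau> t \<in> S" and s: "\<forall>v\<in>s. pnorm (traj \<tau> v m) < 1"
    using finite_set_reaches_interior[OF nonexp reach \<open>finite s\<close>] by blast
  have nonexp_\<tau>: "pnorm (\<tau> t *v z) \<le> pnorm z" for t z
    using nonexp \<tau> by blast
  define M where "M = Suc m"
  define \<rho> where "\<rho> = Max (insert 0 ((\<lambda>v. pnorm (traj \<tau> v M)) ` s))"
  have "pnorm (traj \<tau> v M) < 1" if "v \<in> s" for v
  proof -
    have "pnorm (traj \<tau> v M) \<le> pnorm (traj \<tau> v m)"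
      by (rule pnorm_traj_antimono[OF nonexp_\<tau>]) (simp add: M_def)
    then show ?thesis
      using s that by fastforce
  qed
  then have "\<rho> < 1"
    using \<open>finite s\<close> by (simp add: \<rho>_def)
  have cube_bound: "pnorm (switch_prod \<tau> M *v y) \<le> \<rho>" if "\<And>i. \<bar>y $ i\<bar> \<le> 1" for y
  proof (rule pnorm_le_on_convex_hull)
    show "y \<in> convex hull s"
      using cube that by blast
    show "pnorm (switch_prod \<tau> M *v v) \<le> \<rho>" if "v \<in> s" for v
    proof -
      have "pnorm (traj \<tau> v M) \<le> \<rho>"
        unfolding \<rho>_def using \<open>finite s\<close> that by (intro Max_ge) auto
      then show ?thesis
        by (simp only: traj_eq_switch_prod)
    qed
  qed
  have "pnorm (traj \<tau> x M) \<le> \<rho> * pnorm x" for x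
    unfolding traj_eq_switch_prod
    by (rule pnorm_contraction_from_cube[OF pnorm_switch_prod_le[OF nonexp_\<tau>] cube_bound])
  moreover have "0 \<le> \<rho>"
    using \<open>finite s\<close> by (simp add: \<rho>_def)
  moreover have "0 < M"
    by (simp add: M_def)
  ultimately show ?thesis
    using that \<tau> \<open>\<rho> < 1\<close> by blast
qed

lemma pnorm_traj_periodic_le:
  assumes nonexp: "\<And>t z. pnorm (\<tau> t *v z) \<le> pnorm z"
    and contr: "\<And>x. pnorm (traj \<tau> x M) \<le> \<rho> * pnorm x" and "0 \<le> \<rho>"
  shows "pnorm (traj (\<lambda>t. \<tau> (t mod M)) x t) \<le> \<rho> ^ (t div M) * pnorm x"
proof -
  let ?\<sigma> = "\<lambda>t. \<tau> (t mod M)"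
  have nonexp_\<sigma>: "pnorm (?\<sigma> t *v z) \<le> pnorm z" for t z
    by (rule nonexp)
  have "traj ?\<sigma> x M = traj \<tau> x M" for x
    by (rule traj_cong_prefix) simp
  moreover have "(\<lambda>t. ?\<sigma> (t + M)) = ?\<sigma>"
    by simp
  ultimately have period: "traj ?\<sigma> x (M + t) = traj ?\<sigma> (traj \<tau> x M) t" for x t
    using traj_shift[of ?\<sigma> x M t] by simp
  have "pnorm (traj ?\<sigma> x (k * M + r)) \<le> \<rho> ^ k * pnorm x" for k r
  proof (induction k arbitrary: x)
    case 0
    have "pnorm (traj ?\<sigma> x r) \<le> pnorm (traj ?\<sigma> x 0)"
      by (rule pnorm_traj_antimono[OF nonexp_\<sigma>]) simp
    then show ?case
      by simp
  next
    case (Suc k)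
    have "pnorm (traj ?\<sigma> x (Suc k * M + r)) \<le> \<rho> ^ k * pnorm (traj \<tau> x M)"
      using Suc.IH[of "traj \<tau> x M"] period[of x "k * M + r"] by (simp add: add.assoc)
    also have "\<dots> \<le> \<rho> ^ k * (\<rho> * pnorm x)"
      using contr[of x] \<open>0 \<le> \<rho>\<close> by (simp add: mult_left_mono)
    also have "\<dots> = \<rho> ^ Suc k * pnorm x"
      by (simp add: mult_ac)
    finally show ?case .
  qed
  from this[of "t div M" "t mod M"] show ?thesis
    by simp
qed

lemma summable_power_div:
  fixes \<rho> :: real
  assumes "0 \<le> \<rho>" and "\<rho> < 1" and "0 < M"
  shows "summable (\<lambda>t. \<rho> ^ (t div M))"
proof -
  define \<rho>' where "\<rho>' = (1 + \<rho>) / 2"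
  define q where "q = root M \<rho>'"
  have "0 < \<rho>'" and "\<rho>' < 1" and "\<rho> \<le> \<rho>'"
    using assms by (simp_all add: \<rho>'_def)
  then have "0 < q" and "q < 1" and "q ^ M = \<rho>'"
    using \<open>0 < M\<close> by (simp_all add: q_def real_root_gt_zero)
  have bound: "\<rho> ^ (t div M) \<le> q ^ t / \<rho>'" for t
  proof -
    have "\<rho> ^ (t div M) * \<rho>' \<le> \<rho>' ^ (t div M) * \<rho>'"
      using assms \<open>\<rho> \<le> \<rho>'\<close> \<open>0 < \<rho>'\<close> by (intro mult_right_mono power_mono) simp_all
    also have "\<dots> = q ^ (M * (t div M) + M)"
      by (simp add: power_add power_mult \<open>q ^ M = \<rho>'\<close>)
    also have "\<dots> \<le> q ^ t"
      using \<open>0 < q\<close> \<open>q < 1\<close> \<open>0 < M\<close> dividend_less_times_div[of M t]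
      by (intro power_decreasing) simp_all
    finally show ?thesis
      using \<open>0 < \<rho>'\<close> by (simp add: pos_le_divide_eq)
  qed
  have "summable (\<lambda>t. q ^ t / \<rho>')"
    using \<open>0 < q\<close> \<open>q < 1\<close> by (intro summable_divide summable_geometric) simp
  then show ?thesis
    by (rule summable_comparison_test'[where N = 0]) (use bound assms(1) in simp)
qed

lemma finite_matrices_norm_bound:
  fixes S :: "(real^'n^'m) set"
  assumes "finite S"
  obtains K where "0 \<le> K" and "\<And>A z. A \<in> S \<Longrightarrow> norm (A *v z) \<le> K * norm z"
proof
  define K where "K = (\<Sum>A\<in>S. onorm ((*v) A))"
  show "0 \<le> K"
    unfolding K_def by (intro sum_nonneg onorm_pos_le) simp
  fix A z
  assume "A \<in> S"
  have "norm (A *v z) \<le> onorm ((*v) A) * norm z"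
    by (rule onorm) simp
  also have "\<dots> \<le> K * norm z"
    unfolding K_def using assms \<open>A \<in> S\<close>
    by (intro mult_right_mono member_le_sum onorm_pos_le) simp_all
  finally show "norm (A *v z) \<le> K * norm z" .
qed

lemma norm_step_le_pnorm:
  fixes A :: "real^'n^'n"
  assumes "A *v ones = ones" and "\<And>z. norm (A *v z) \<le> K * norm z" and "0 \<le> K"
  shows "norm (A *v x - x) \<le> (K + 1) * (CARD('n) * pnorm x)"
proof -
  define w where "w = x - ((max_entry x + min_entry x) / 2) *\<^sub>R ones"
  have "norm w \<le> (\<Sum>i\<in>UNIV. \<bar>w $ i\<bar>)"
    by (rule norm_le_l1_cart)
  also have "\<dots> \<le> (\<Sum>i\<in>(UNIV :: 'n set). pnorm x)"
    using abs_sub_midrange_le by (intro sum_mono) (simp add: w_def)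
  finally have "norm w \<le> CARD('n) * pnorm x"
    by simp
  have "A *v x - x = A *v w - w"
    using assms(1) by (simp add: w_def matrix_vector_mult_diff_distrib matrix_vector_mult_scaleR)
  then have "norm (A *v x - x) \<le> K * norm w + norm w"
    using assms(2)[of w] norm_triangle_ineq4[of "A *v w" w] by simp
  also have "\<dots> = (K + 1) * norm w"
    by (simp add: algebra_simps)
  also have "\<dots> \<le> (K + 1) * (CARD('n) * pnorm x)"
    using \<open>norm w \<le> CARD('n) * pnorm x\<close> \<open>0 \<le> K\<close> by (intro mult_left_mono) simp_all
  finally show ?thesis .
qed

lemma traj_converges_to_consensus:
  fixes \<sigma> :: "nat \<Rightarrow> real^'n^'n"
  assumes ones: "\<And>t. \<sigma> t *v ones = ones"
    and bound: "\<And>t z. norm (\<sigma> t *v z) \<le> K * norm z" and "0 \<le> K"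
    and summable: "summable (\<lambda>t. pnorm (traj \<sigma> x0 t))"
  shows "\<exists>c. traj \<sigma> x0 \<longlonglongrightarrow> c *\<^sub>R ones"
proof -
  let ?x = "traj \<sigma> x0"
  define d where "d t = ?x (Suc t) - ?x t" for t
  have step: "norm (d t) \<le> (K + 1) * CARD('n) * pnorm (?x t)" for t
    using norm_step_le_pnorm[OF ones bound \<open>0 \<le> K\<close>] by (simp add: d_def mult.assoc)
  have "summable (\<lambda>t. (K + 1) * CARD('n) * pnorm (?x t))"
    using summable by (rule summable_mult)
  then have "summable d"
    by (rule summable_comparison_test'[where N = 0]) (rule step)
  moreover have "?x = (\<lambda>t. x0 + (\<Sum>s<t. d s))"
  proof
    fix t
    show "?x t = x0 + (\<Sum>s<t. d s)"
      unfolding d_def sum_lessThan_telescope[of ?x t] by simp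
  qed
  ultimately have lim: "?x \<longlonglongrightarrow> x0 + suminf d"
    by (simp add: summable_LIMSEQ tendsto_add)
  then have "(\<lambda>t. pnorm (?x t)) \<longlonglongrightarrow> pnorm (x0 + suminf d)"
    by (rule tendsto_pnorm)
  moreover have "(\<lambda>t. pnorm (?x t)) \<longlonglongrightarrow> 0"
    using summable by (rule summable_LIMSEQ_zero)
  ultimately have "pnorm (x0 + suminf d) = 0"
    by (rule LIMSEQ_unique)
  then show ?thesis
    using lim by (auto simp: pnorm_eq_0_iff)
qed

lemma consensus_switching_exists:
  fixes S :: "(real^'n^'n) set"
  assumes "finite S" and ones: "\<And>A. A \<in> S \<Longrightarrow> A *v ones = ones"
    and nonexp: "\<And>A x. A \<in> S \<Longrightarrow> pnorm (A *v x) \<le> pnorm x"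
    and reach: "\<And>x0. pnorm x0 \<le> 1 \<Longrightarrow> \<exists>\<sigma> T. (\<forall>t. \<sigma> t \<in> S) \<and> pnorm (traj \<sigma> x0 T) < 1"
  shows "\<exists>\<sigma>. (\<forall>t. \<sigma> t \<in> S) \<and> (\<forall>x0. \<exists>c. traj \<sigma> x0 \<longlonglongrightarrow> c *\<^sub>R ones)"
proof -
  obtain \<tau> M \<rho> where \<tau>: "\<forall>t. \<tau> t \<in> S" and "0 < M" "0 \<le> \<rho>" "\<rho> < 1"
    and contr: "\<And>x. pnorm (traj \<tau> x M) \<le> \<rho> * pnorm x"
    using uniform_contraction[OF nonexp reach] by blast
  obtain K where "0 \<le> K" and K: "\<And>A z. A \<in> S \<Longrightarrow> norm (A *v z) \<le> K * norm z"
    using finite_matrices_norm_bound[OF \<open>finite S\<close>] by blast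
  define \<sigma> where "\<sigma> t = \<tau> (t mod M)" for t
  have \<sigma>: "\<forall>t. \<sigma> t \<in> S"
    using \<tau> by (simp add: \<sigma>_def)
  have "\<exists>c. traj \<sigma> x0 \<longlonglongrightarrow> c *\<^sub>R ones" for x0
  proof (rule traj_converges_to_consensus)
    show "\<sigma> t *v ones = ones" and "norm (\<sigma> t *v z) \<le> K * norm z" for t z
      using ones K \<sigma> by blast+
    have decay: "pnorm (traj \<sigma> x0 t) \<le> \<rho> ^ (t div M) * pnorm x0" for t
      unfolding \<sigma>_def using nonexp \<tau> contr \<open>0 \<le> \<rho>\<close> by (intro pnorm_traj_periodic_le) auto
    have "summable (\<lambda>t. \<rho> ^ (t div M) * pnorm x0)"
      using \<open>0 \<le> \<rho>\<close> \<open>\<rho> < 1\<close> \<open>0 < M\<close> by (intro summable_mult2 summable_power_div)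
    then show "summable (\<lambda>t. pnorm (traj \<sigma> x0 t))"
      by (rule summable_comparison_test'[where N = 0]) (use decay in \<open>simp add: abs_of_nonneg[OF pnorm_nonneg]\<close>)
  qed (fact \<open>0 \<le> K\<close>)
  then show ?thesis
    using \<sigma> by blast
qed

theorem proposition1:
  fixes S :: "(real^'n^'n) set"
  assumes "CARD('n) \<ge> 2"
    and "finite S"
    and "\<And>A. A \<in> S \<Longrightarrow> A *v ones = ones"
    and "\<And>A x. A \<in> S \<Longrightarrow> pnorm (A *v x) \<le> pnorm x"
  shows "(\<exists>\<sigma>. (\<forall>t. \<sigma> t \<in> S) \<and>
            (\<forall>x0. \<exists>c::real. traj \<sigma> x0 \<longlonglongrightarrow> c *\<^sub>R ones))
         \<longleftrightarrow>
         (\<forall>x0 \<in> Pball. \<exists>\<sigma>. (\<forall>t. \<sigma> t \<in> S) \<and>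
            traj \<sigma> x0 (Nbound CARD('n)) \<in> interior Pball)"
proof
  assume "\<exists>\<sigma>. (\<forall>t. \<sigma> t \<in> S) \<and> (\<forall>x0. \<exists>c::real. traj \<sigma> x0 \<longlonglongrightarrow> c *\<^sub>R ones)"
  then obtain \<sigma> where \<sigma>: "\<forall>t. \<sigma> t \<in> S" and conv: "\<And>x0. \<exists>c. traj \<sigma> x0 \<longlonglongrightarrow> c *\<^sub>R ones"
    by blast
  show "\<forall>x0 \<in> Pball. \<exists>\<sigma>. (\<forall>t. \<sigma> t \<in> S) \<and> traj \<sigma> x0 (Nbound CARD('n)) \<in> interior Pball"
  proof
    fix x0 :: "real^'n"
    assume "x0 \<in> Pball"
    then have "pnorm x0 \<le> 1"
      by (simp add: Pball_def)
    moreover obtain T where "pnorm (traj \<sigma> x0 T) < 1"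
      using conv traj_tendsto_ones_reaches_interior by blast
    ultimately show "\<exists>\<sigma>. (\<forall>t. \<sigma> t \<in> S) \<and> traj \<sigma> x0 (Nbound CARD('n)) \<in> interior Pball"
      using reaches_interior_within_Nbound[OF assms(4) \<sigma>] by (simp add: interior_Pball)
  qed
next
  assume rhs: "\<forall>x0 \<in> Pball. \<exists>\<sigma>. (\<forall>t. \<sigma> t \<in> S) \<and> traj \<sigma> x0 (Nbound CARD('n)) \<in> interior Pball"
  have reach: "\<exists>\<sigma> T. (\<forall>t. \<sigma> t \<in> S) \<and> pnorm (traj \<sigma> x0 T) < 1" if "pnorm x0 \<le> 1" for x0
  proof -
    have "x0 \<in> Pball"
      using that by (simp add: Pball_def)
    then obtain \<sigma> where "\<forall>t. \<sigma> t \<in> S" and "traj \<sigma> x0 (Nbound CARD('n)) \<in> interior Pball"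
      using rhs by blast
    then show ?thesis
      by (auto simp: interior_Pball)
  qed
  show "\<exists>\<sigma>. (\<forall>t. \<sigma> t \<in> S) \<and> (\<forall>x0. \<exists>c::real. traj \<sigma> x0 \<longlonglongrightarrow> c *\<^sub>R ones)"
    by (rule consensus_switching_exists[OF assms(2-4) reach])
qed

end
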